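(* For every odometer $(X,T)$ there exists a metric $\rho$ on $X$ compatible with its topology such that $T$ has the (LRS) property with respect to $\rho$.
   Context: A dynamical system is $(X,T)$ with $X$ a compact metric space and $T\colon X\to X$ continuous. A point $x$ is regularly recurrent if for every open $U\ni x$ there is $n\geq1$ with $T^{in}(x)\in U$ for all $i\geq0$. $(X,T)$ is an odometer if it is equicontinuous (for every $\varepsilon>0$ there is $\delta>0$ with $d(x,y)<\delta\Rightarrow d(T^nx,T^ny)<\varepsilon$ for all $n\geq0$) and some regularly recurrent point has dense orbit. $T$ has the (LRS) property with respect to $\rho$ if for every $x\in X$ there is $\varepsilon_x>0$ such that $0<\rho(x,y)<\varepsilon_x$ implies $\rho(T(x),T(y))<\rho(x,y)$. *)

theory Defs
  imports "HOL-Analysis.Analysis"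
begin

definition dyn_system :: "'a::metric_space set \<Rightarrow> ('a \<Rightarrow> 'a) \<Rightarrow> bool" where
  "dyn_system X T \<longleftrightarrow> compact X \<and> T ` X \<subseteq> X \<and> continuous_on X T"

definition equicontinuous_sys :: "'a::metric_space set \<Rightarrow> ('a \<Rightarrow> 'a) \<Rightarrow> bool" where
  "equicontinuous_sys X T \<longleftrightarrow>
     (\<forall>\<epsilon>>0. \<exists>\<delta>>0. \<forall>x\<in>X. \<forall>y\<in>X. dist x y < \<delta> \<longrightarrow>
        (\<forall>n::nat. dist ((T ^^ n) x) ((T ^^ n) y) < \<epsilon>))"

definition regularly_recurrent :: "'a::metric_space set \<Rightarrow> ('a \<Rightarrow> 'a) \<Rightarrow> 'a \<Rightarrow> bool" where
  "regularly_recurrent X T x \<longleftrightarrow>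
     (\<forall>U. openin (top_of_set X) U \<and> x \<in> U \<longrightarrow>
        (\<exists>n::nat. n \<ge> 1 \<and> (\<forall>i::nat. (T ^^ (i * n)) x \<in> U)))"

definition dense_orbit :: "'a::metric_space set \<Rightarrow> ('a \<Rightarrow> 'a) \<Rightarrow> 'a \<Rightarrow> bool" where
  "dense_orbit X T x \<longleftrightarrow> closure (range (\<lambda>n::nat. (T ^^ n) x)) = X"

definition odometer :: "'a::metric_space set \<Rightarrow> ('a \<Rightarrow> 'a) \<Rightarrow> bool" where
  "odometer X T \<longleftrightarrow> dyn_system X T \<and> equicontinuous_sys X T \<and>
     (\<exists>x\<in>X. regularly_recurrent X T x \<and> dense_orbit X T x)"

definition LRS :: "'a set \<Rightarrow> ('a \<Rightarrow> 'a) \<Rightarrow> ('a \<Rightarrow> 'a \<Rightarrow> real) \<Rightarrow> bool" where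
  "LRS X T \<rho> \<longleftrightarrow> (\<forall>x\<in>X. \<exists>\<epsilon>>0. \<forall>y\<in>X.
       0 < \<rho> x y \<and> \<rho> x y < \<epsilon> \<longrightarrow> \<rho> (T x) (T y) < \<rho> x y)"

end

theory Submission
  imports Defs
begin

text \<open>
  The orbit metric \<open>odist x y = (SUP n. dist (T\<^sup>n x) (T\<^sup>n y))\<close> is uniformly
  equivalent to \<open>dist\<close> by equicontinuity, and regular recurrence of the point \<open>x0\<close> with
  dense orbit makes \<open>T\<close> an \<open>odist\<close>-isometry. For \<open>n \<ge> 1\<close> the closure of the
  \<open>T\<^sup>n\<close>-orbit of \<open>x0\<close> and its first \<open>p\<close> images under \<open>T\<close> form a clopen partition
  of \<open>X\<close> that \<open>T\<close> permutes cyclically. A sequence of such partitions with mesh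
  tending to \<open>0\<close> and cycle lengths \<open>p\<^sub>0 = 1 < p\<^sub>1 < \<dots>\<close>, each dividing the next, gives every
  point coordinates \<open>c\<^sub>k x \<in> \<int>/p\<^sub>k\<close> with \<open>c\<^sub>k (T x) = c\<^sub>k x + 1\<close>.

  If \<open>K\<close> is the first level separating \<open>x\<close> and \<open>y\<close>, put
  \<open>\<rho> x y = 2\<^sup>-\<^sup>K (1 + w)\<close>, where \<open>w \<in> [0,1)\<close> depends only on \<open>c\<^sub>K\<^sub>-\<^sub>1 x\<close> and drops by
  \<open>1/p\<^sub>K\<^sub>-\<^sub>1\<close> whenever the coordinate advances, except at a single jump position.
  This is an ultrametric inducing the topology of \<open>X\<close>. Since \<open>T\<close> preserves \<open>K\<close> and each
  point sits on a jump position at only finitely many levels, \<open>T\<close> strictly decreases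
  \<open>\<rho>\<close> at small scales. A finite \<open>X\<close> is discrete, so there \<open>dist\<close> itself works.
\<close>

lemma mtopology_eq_top_of_set:
  fixes X :: "'a::metric_space set"
  assumes d: "Metric_space X d"
    and dist_imp_d: "\<And>x e. x \<in> X \<Longrightarrow> e > 0 \<Longrightarrow> \<exists>\<delta>>0. \<forall>y\<in>X. dist x y < \<delta> \<longrightarrow> d x y < e"
    and d_imp_dist: "\<And>x e. x \<in> X \<Longrightarrow> e > 0 \<Longrightarrow> \<exists>\<delta>>0. \<forall>y\<in>X. d x y < \<delta> \<longrightarrow> dist x y < e"
  shows "Metric_space.mtopology X d = top_of_set X"
proof -
  interpret Submetric UNIV dist X by unfold_locales auto
  interpret D: Metric_space X d by (rule d)
  have "continuous_map sub.mtopology D.mtopology id"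
    unfolding sub.metric_continuous_map[OF d] using dist_imp_d by fastforce
  moreover have "continuous_map D.mtopology sub.mtopology id"
    unfolding D.metric_continuous_map[OF sub.Metric_space_axioms] using d_imp_dist by fastforce
  ultimately have "homeomorphic_maps sub.mtopology D.mtopology id id"
    by (simp add: homeomorphic_maps_def)
  then have "D.mtopology = sub.mtopology"
    by (simp only: homeomorphic_maps_id)
  then show ?thesis
    using mtopology_submetric by simp
qed

lemma mtopology_dist_eq_top_of_set:
  fixes X :: "'a::metric_space set"
  shows "Metric_space.mtopology X dist = top_of_set X"
proof -
  interpret Submetric UNIV dist X by unfold_locales auto
  show ?thesis using mtopology_submetric by simp
qed

lemma LRS_dist_finite:
  fixes X :: "'a::metric_space set"
  assumes "finite X"
  shows "LRS X T dist"
  unfolding LRS_def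
proof
  fix x assume "x \<in> X"
  obtain \<delta> where "\<delta> > 0" "\<forall>y\<in>X. y \<noteq> x \<longrightarrow> \<delta> \<le> dist x y"
    using finite_set_avoid[OF assms] by blast
  then show "\<exists>\<epsilon>>0. \<forall>y\<in>X. 0 < dist x y \<and> dist x y < \<epsilon> \<longrightarrow> dist (T x) (T y) < dist x y"
    by (intro exI[of _ \<delta>]) (auto dest: leD)
qed

lemma Suc_mod_eq_Suc_mod_iff:
  fixes a b m :: nat
  assumes "a < m" "b < m"
  shows "Suc a mod m = Suc b mod m \<longleftrightarrow> a = b"
proof -
  have wrap: "Suc c mod m = (if Suc c = m then 0 else Suc c)" if "c < m" for c
    using that by auto
  show ?thesis
    using wrap[OF assms(1)] wrap[OF assms(2)] by auto
qed

lemma int_mod_diff_Suc_mod: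
  fixes j r q :: nat
  assumes "j < q" "r < q" "r \<noteq> j"
  shows "(int j - int (Suc r mod q)) mod int q = (int j - int r) mod int q - 1"
proof -
  define s where "s = (int j - int r) mod int q"
  have "0 \<le> s" "s < int q"
    using assms unfolding s_def by simp_all
  moreover have "s \<noteq> 0"
  proof
    assume "s = 0"
    then have "int q dvd int j - int r"
      unfolding s_def by (simp add: mod_eq_0_iff_dvd)
    then obtain c where c: "int j - int r = int q * c" by (rule dvdE)
    have "\<bar>int q * c\<bar> < int q"
      using assms c by linarith
    have "c = 0"
    proof (rule ccontr)
      assume "c \<noteq> 0"
      then have "int q * 1 \<le> int q * \<bar>c\<bar>"
        by (intro mult_left_mono) auto
      then show False
        using \<open>\<bar>int q * c\<bar> < int q\<close> by (simp add: abs_mult)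
    qed
    then show False using c assms(3) by simp
  qed
  moreover have "int (Suc r mod q) = (1 + int r) mod int q"
    by (simp add: zmod_int)
  then have "(int j - int (Suc r mod q)) mod int q = (s - 1) mod int q"
    unfolding s_def by (simp add: mod_diff_right_eq mod_diff_left_eq algebra_simps)
  ultimately show ?thesis
    unfolding s_def by simp
qed

lemma funpow_add_apply: "(f ^^ (m + n)) x = (f ^^ m) ((f ^^ n) x)"
  by (simp add: funpow_add)

locale pointed_odometer =
  fixes X :: "'a::metric_space set" and T :: "'a \<Rightarrow> 'a" and x0 :: 'a
  assumes compact_X: "compact X" and T_into: "T ` X \<subseteq> X" and continuous_T: "continuous_on X T"
    and equicontinuous: "equicontinuous_sys X T" and x0_in: "x0 \<in> X"
    and recurrent_x0: "regularly_recurrent X T x0" and dense_x0: "dense_orbit X T x0"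
begin

lemma iter_in: "x \<in> X \<Longrightarrow> (T ^^ n) x \<in> X"
  by (induction n) (use T_into in auto)

lemma orbit_in: "(T ^^ n) x0 \<in> X"
  by (rule iter_in[OF x0_in])

lemma continuous_on_iter: "continuous_on X (T ^^ n)"
proof (induction n)
  case (Suc n)
  have "continuous_on X (T ^^ n \<circ> T)"
    by (rule continuous_on_compose[OF continuous_T]) (use Suc continuous_on_subset T_into in blast)
  then show ?case by (simp add: funpow_Suc_right del: funpow.simps)
qed (simp add: continuous_on_id)

subsection \<open>The orbit metric\<close>

definition odist :: "'a \<Rightarrow> 'a \<Rightarrow> real" where
  "odist x y = (SUP n. dist ((T ^^ n) x) ((T ^^ n) y))"

lemma bdd_above_dist_iter:
  assumes "x \<in> X" "y \<in> X"
  shows "bdd_above (range (\<lambda>n. dist ((T ^^ n) x) ((T ^^ n) y)))"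
proof -
  obtain B where "\<forall>u\<in>X. \<forall>v\<in>X. dist u v \<le> B"
    using compact_X compact_imp_bounded bounded_two_points by blast
  then show ?thesis by (intro bdd_aboveI2[of _ _ B]) (use assms iter_in in blast)
qed

lemma dist_iter_le_odist: "x \<in> X \<Longrightarrow> y \<in> X \<Longrightarrow> dist ((T ^^ n) x) ((T ^^ n) y) \<le> odist x y"
  unfolding odist_def by (rule cSUP_upper[OF _ bdd_above_dist_iter]) auto

lemma odist_le: "(\<And>n. dist ((T ^^ n) x) ((T ^^ n) y) \<le> e) \<Longrightarrow> odist x y \<le> e"
  unfolding odist_def by (rule cSUP_least) auto

lemma dist_le_odist: "x \<in> X \<Longrightarrow> y \<in> X \<Longrightarrow> dist x y \<le> odist x y"
  using dist_iter_le_odist[of x y 0] by simp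

lemma odist_pos: "x \<in> X \<Longrightarrow> y \<in> X \<Longrightarrow> x \<noteq> y \<Longrightarrow> 0 < odist x y"
  using dist_le_odist[of x y] zero_less_dist_iff[of x y] by linarith

lemma odist_commute: "odist x y = odist y x"
  unfolding odist_def by (simp add: dist_commute)

lemma odist_self [simp]: "odist x x = 0"
  unfolding odist_def by simp

lemma odist_triangle:
  assumes "x \<in> X" "y \<in> X" "z \<in> X"
  shows "odist x z \<le> odist x y + odist y z"
proof (rule odist_le)
  fix n
  have "dist ((T ^^ n) x) ((T ^^ n) z) \<le> dist ((T ^^ n) x) ((T ^^ n) y) + dist ((T ^^ n) y) ((T ^^ n) z)"
    by (rule dist_triangle)
  also have "\<dots> \<le> odist x y + odist y z"
    using dist_iter_le_odist assms by (intro add_mono) auto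
  finally show "dist ((T ^^ n) x) ((T ^^ n) z) \<le> odist x y + odist y z" .
qed

lemma odist_triangle3:
  assumes "x \<in> X" "a \<in> X" "b \<in> X" "y \<in> X"
  shows "odist x y \<le> odist x a + odist a b + odist b y"
  using odist_triangle[of x a y] odist_triangle[of a b y] assms by linarith

lemma odist_T_le: "x \<in> X \<Longrightarrow> y \<in> X \<Longrightarrow> odist (T x) (T y) \<le> odist x y"
  by (rule odist_le) (use dist_iter_le_odist[of x y "Suc n" for n] in \<open>simp add: funpow_swap1\<close>)

lemma odist_iter_le: "x \<in> X \<Longrightarrow> y \<in> X \<Longrightarrow> odist ((T ^^ m) x) ((T ^^ m) y) \<le> odist x y"
proof (induction m)
  case (Suc m)
  then show ?case using odist_T_le[of "(T ^^ m) x" "(T ^^ m) y"] iter_in by fastforce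
qed simp

lemma odist_uniformly_small:
  assumes "e > 0"
  shows "\<exists>\<delta>>0. \<forall>x\<in>X. \<forall>y\<in>X. dist x y < \<delta> \<longrightarrow> odist x y \<le> e"
proof -
  obtain \<delta> where "\<delta> > 0" and \<delta>: "\<forall>x\<in>X. \<forall>y\<in>X. dist x y < \<delta> \<longrightarrow>
      (\<forall>n. dist ((T ^^ n) x) ((T ^^ n) y) < e)"
    using equicontinuous assms unfolding equicontinuous_sys_def by blast
  have "odist x y \<le> e" if "x \<in> X" "y \<in> X" "dist x y < \<delta>" for x y
    using \<delta> that by (intro odist_le less_imp_le) blast
  then show ?thesis using \<open>\<delta> > 0\<close> by blast
qed

lemma in_closure_iff_odist:
  assumes "S \<subseteq> X" "x \<in> X"
  shows "x \<in> closure S \<longleftrightarrow> (\<forall>e>0. \<exists>s\<in>S. odist x s < e)"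
proof
  assume x: "x \<in> closure S"
  show "\<forall>e>0. \<exists>s\<in>S. odist x s < e"
  proof (intro allI impI)
    fix e :: real assume "e > 0"
    then obtain \<delta> where "\<delta> > 0" and \<delta>: "\<forall>x\<in>X. \<forall>y\<in>X. dist x y < \<delta> \<longrightarrow> odist x y \<le> e / 2"
      using odist_uniformly_small[of "e / 2"] by auto
    obtain s where "s \<in> S" "dist x s < \<delta>"
      using x \<open>\<delta> > 0\<close> closure_approachable by (metis dist_commute)
    then have "odist x s \<le> e / 2"
      using \<delta> assms by blast
    then show "\<exists>s\<in>S. odist x s < e"
      using \<open>s \<in> S\<close> \<open>e > 0\<close> by (intro bexI[of _ s]) auto
  qed
next
  assume "\<forall>e>0. \<exists>s\<in>S. odist x s < e"
  then show "x \<in> closure S"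
    unfolding closure_approachable
    using dist_le_odist assms by (metis dist_commute order.strict_trans1 subsetD)
qed

lemma orbit_odist_dense: "x \<in> X \<Longrightarrow> e > 0 \<Longrightarrow> \<exists>a. odist x ((T ^^ a) x0) < e"
  using in_closure_iff_odist[of "range (\<lambda>n. (T ^^ n) x0)" x] dense_x0 orbit_in
  unfolding dense_orbit_def by blast

lemma recurrence: "e > 0 \<Longrightarrow> \<exists>m\<ge>1. \<forall>i. odist ((T ^^ (i * m)) x0) x0 < e"
proof -
  assume "e > 0"
  let ?U = "{y\<in>X. odist y x0 < e}"
  have "openin (top_of_set X) ?U"
    unfolding openin_euclidean_subtopology_iff
  proof (intro conjI ballI)
    fix y assume y: "y \<in> ?U"
    define f where "f = (e - odist y x0) / 2"
    have "f > 0" using y f_def by auto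
    then obtain \<delta> where "\<delta> > 0" and \<delta>: "\<forall>x\<in>X. \<forall>y\<in>X. dist x y < \<delta> \<longrightarrow> odist x y \<le> f"
      using odist_uniformly_small by blast
    have "x' \<in> ?U" if "x' \<in> X" "dist x' y < \<delta>" for x'
    proof -
      have "odist x' y \<le> f" using \<delta> y that by blast
      then show ?thesis
        using odist_triangle[of x' y x0] x0_in y that unfolding f_def by auto
    qed
    then show "\<exists>\<delta>>0. \<forall>x'\<in>X. dist x' y < \<delta> \<longrightarrow> x' \<in> ?U"
      using \<open>\<delta> > 0\<close> by blast
  qed auto
  moreover have "x0 \<in> ?U" using x0_in \<open>e > 0\<close> by simp
  ultimately show ?thesis
    using recurrent_x0 unfolding regularly_recurrent_def by blast
qed

text \<open>Shifting an orbit pair by a return time \<open>m \<ge> 1\<close> of \<open>x0\<close> costs little, and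
  \<open>T\<^sup>m\<close> factors through \<open>T\<close>.\<close>

lemma odist_orbit_le_T:
  "odist ((T ^^ a) x0) ((T ^^ b) x0) \<le> odist ((T ^^ Suc a) x0) ((T ^^ Suc b) x0)"
proof (rule field_le_epsilon)
  fix e :: real assume "e > 0"
  then obtain m where "m \<ge> 1" and "\<forall>i. odist ((T ^^ (i * m)) x0) x0 < e / 2"
    using recurrence[of "e / 2"] by auto
  then have m: "odist ((T ^^ m) x0) x0 < e / 2"
    by (metis mult_1)
  have shift: "odist ((T ^^ k) x0) ((T ^^ (k + m)) x0) < e / 2" for k
    using odist_iter_le[OF x0_in orbit_in, of k m] m
    by (simp add: funpow_add_apply odist_commute)
  obtain l where "m = Suc l" using \<open>m \<ge> 1\<close> by (cases m) auto
  then have "k + m = l + Suc k" for k by simp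
  then have "odist ((T ^^ (a + m)) x0) ((T ^^ (b + m)) x0) \<le> odist ((T ^^ Suc a) x0) ((T ^^ Suc b) x0)"
    using odist_iter_le[OF orbit_in orbit_in, of l "Suc a" "Suc b"]
    by (simp only: funpow_add_apply)
  moreover have "odist ((T ^^ a) x0) ((T ^^ b) x0) \<le> odist ((T ^^ a) x0) ((T ^^ (a + m)) x0)
      + odist ((T ^^ (a + m)) x0) ((T ^^ (b + m)) x0) + odist ((T ^^ (b + m)) x0) ((T ^^ b) x0)"
    by (rule odist_triangle3) (rule orbit_in)+
  ultimately show "odist ((T ^^ a) x0) ((T ^^ b) x0) \<le> odist ((T ^^ Suc a) x0) ((T ^^ Suc b) x0) + e"
    using shift[of a] shift[of b] odist_commute[of "(T ^^ (b + m)) x0" "(T ^^ b) x0"] by linarith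
qed

lemma odist_T: assumes "x \<in> X" "y \<in> X" shows "odist (T x) (T y) = odist x y"
proof -
  have "odist x y \<le> odist (T x) (T y)"
  proof (rule field_le_epsilon)
    fix e :: real assume "e > 0"
    then have "e / 4 > 0" by simp
    then obtain a b where a: "odist x ((T ^^ a) x0) < e / 4" and b: "odist y ((T ^^ b) x0) < e / 4"
      using orbit_odist_dense assms by blast
    have "odist x y \<le> odist x ((T ^^ a) x0) + odist ((T ^^ a) x0) ((T ^^ b) x0) + odist ((T ^^ b) x0) y"
      by (rule odist_triangle3) (use assms orbit_in in auto)
    moreover have "odist ((T ^^ a) x0) ((T ^^ b) x0) \<le> odist (T ((T ^^ a) x0)) (T ((T ^^ b) x0))"
      using odist_orbit_le_T[of a b] by simp
    moreover have "odist (T ((T ^^ a) x0)) (T ((T ^^ b) x0))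
        \<le> odist (T ((T ^^ a) x0)) (T x) + odist (T x) (T y) + odist (T y) (T ((T ^^ b) x0))"
      by (rule odist_triangle3) (use assms T_into orbit_in in auto)
    moreover have "odist (T ((T ^^ a) x0)) (T x) \<le> odist x ((T ^^ a) x0)"
      using odist_T_le[OF orbit_in assms(1)] by (simp add: odist_commute)
    moreover have "odist (T y) (T ((T ^^ b) x0)) \<le> odist y ((T ^^ b) x0)"
      using odist_T_le[OF assms(2) orbit_in] .
    ultimately show "odist x y \<le> odist (T x) (T y) + e"
      using a b odist_commute[of "(T ^^ b) x0" y] by linarith
  qed
  then show ?thesis using odist_T_le[OF assms] by linarith
qed

lemma odist_iter: "x \<in> X \<Longrightarrow> y \<in> X \<Longrightarrow> odist ((T ^^ m) x) ((T ^^ m) y) = odist x y"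
proof (induction m)
  case (Suc m)
  then show ?case using odist_T[of "(T ^^ m) x" "(T ^^ m) y"] iter_in by simp
qed simp

lemma iter_inj: "x \<in> X \<Longrightarrow> y \<in> X \<Longrightarrow> (T ^^ m) x = (T ^^ m) y \<Longrightarrow> x = y"
  using odist_iter[of x y m] odist_pos[of x y] by auto

subsection \<open>Cyclic clopen partitions\<close>

definition return_set :: "nat \<Rightarrow> 'a set" where
  "return_set n = closure (range (\<lambda>i. (T ^^ (i * n)) x0))"

definition period :: "nat \<Rightarrow> nat" where
  "period n = (LEAST q. 0 < q \<and> (T ^^ q) x0 \<in> return_set n)"

definition piece :: "nat \<Rightarrow> nat \<Rightarrow> 'a set" where
  "piece n r = (T ^^ r) ` return_set n"

definition piece_index :: "nat \<Rightarrow> 'a \<Rightarrow> nat" where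
  "piece_index n x = (THE r. r < period n \<and> x \<in> piece n r)"

lemma return_set_subset: "return_set n \<subseteq> X"
  unfolding return_set_def
  by (rule closure_minimal) (use orbit_in compact_X compact_imp_closed in auto)

lemma compact_return_set: "compact (return_set n)"
  using compact_Int_closed[OF compact_X, of "return_set n"] return_set_subset
  by (simp add: return_set_def Int_absorb1)

lemma orbit_in_return_set: "(T ^^ (i * n)) x0 \<in> return_set n"
  unfolding return_set_def by (simp add: closure_subset[THEN subsetD])

lemma x0_in_return_set: "x0 \<in> return_set n"
  using orbit_in_return_set[of 0] by simp

lemma in_return_set_iff:
  "y \<in> X \<Longrightarrow> y \<in> return_set n \<longleftrightarrow> (\<forall>e>0. \<exists>i. odist y ((T ^^ (i * n)) x0) < e)"
  unfolding return_set_def using in_closure_iff_odist[of "range (\<lambda>i. (T ^^ (i * n)) x0)"] orbit_in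
  by blast

lemma iter_closure_subset:
  assumes "(T ^^ m) ` range (\<lambda>i. (T ^^ (i * n)) x0) \<subseteq> return_set n"
  shows "(T ^^ m) ` return_set n \<subseteq> return_set n"
  unfolding return_set_def
proof (rule image_closure_subset)
  show "continuous_on (closure (range (\<lambda>i. (T ^^ (i * n)) x0))) (T ^^ m)"
    using continuous_on_iter continuous_on_subset return_set_subset unfolding return_set_def by blast
qed (use assms in \<open>simp_all add: return_set_def\<close>)

lemma return_set_iter_invariant: "(T ^^ (k * n)) ` return_set n \<subseteq> return_set n"
proof (rule iter_closure_subset, safe)
  fix i
  have "(T ^^ (k * n)) ((T ^^ (i * n)) x0) = (T ^^ ((k + i) * n)) x0"
    by (simp add: funpow_add_apply[symmetric] algebra_simps)
  then show "(T ^^ (k * n)) ((T ^^ (i * n)) x0) \<in> return_set n"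
    using orbit_in_return_set by simp
qed

lemma return_set_invariant:
  assumes "(T ^^ m) x0 \<in> return_set n"
  shows "(T ^^ m) ` return_set n \<subseteq> return_set n"
proof (rule iter_closure_subset, safe)
  fix i
  have "(T ^^ m) ((T ^^ (i * n)) x0) = (T ^^ (i * n)) ((T ^^ m) x0)"
    by (simp add: funpow_add_apply[symmetric] add.commute)
  then show "(T ^^ m) ((T ^^ (i * n)) x0) \<in> return_set n"
    using return_set_iter_invariant[of i n] assms by auto
qed

lemma return_set_approx_late:
  assumes "a \<in> return_set n" "e > 0"
  shows "\<exists>i\<ge>M. odist a ((T ^^ (i * n)) x0) < e"
proof -
  have a: "a \<in> X" using assms(1) return_set_subset by blast
  have "e / 2 > 0" using assms(2) by simp
  then obtain i0 where i0: "odist a ((T ^^ (i0 * n)) x0) < e / 2"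
    using in_return_set_iff[OF a] assms(1) by blast
  obtain m where "m \<ge> 1" and "\<forall>i. odist ((T ^^ (i * m)) x0) x0 < e / 2"
    using recurrence[OF \<open>e / 2 > 0\<close>] by blast
  then have m: "odist x0 ((T ^^ (M * n * m)) x0) < e / 2"
    by (simp add: odist_commute)
  have "(T ^^ ((i0 + M * m) * n)) x0 = (T ^^ (i0 * n)) ((T ^^ (M * n * m)) x0)"
    by (simp add: funpow_add_apply[symmetric] algebra_simps)
  then have "odist ((T ^^ (i0 * n)) x0) ((T ^^ ((i0 + M * m) * n)) x0) < e / 2"
    using odist_iter[OF x0_in orbit_in] m by simp
  then have "odist a ((T ^^ ((i0 + M * m) * n)) x0) < e"
    using odist_triangle[of a "(T ^^ (i0 * n)) x0" "(T ^^ ((i0 + M * m) * n)) x0"] a orbit_in i0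
    by fastforce
  moreover have "M \<le> i0 + M * m"
    using \<open>m \<ge> 1\<close> by (simp add: trans_le_add2)
  ultimately show ?thesis by blast
qed

text \<open>If some point of \<open>return_set n\<close> returns to it after \<open>t\<close> steps, so does \<open>x0\<close>:
  cancel the common isometry \<open>T\<^bsup>i n\<^esup>\<close> from an approximation by late orbit points.\<close>

lemma orbit_in_return_set_if_return:
  assumes b: "b \<in> return_set n" and tb: "(T ^^ t) b \<in> return_set n"
  shows "(T ^^ t) x0 \<in> return_set n"
  unfolding in_return_set_iff[OF orbit_in]
proof (intro allI impI)
  fix e :: real assume "e > 0"
  then have "e / 2 > 0" by simp
  have bX: "b \<in> X" using b return_set_subset by blast
  obtain i where "odist b ((T ^^ (i * n)) x0) < e / 2"
    using in_return_set_iff[OF bX] b \<open>e / 2 > 0\<close> by blast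
  then have i: "odist ((T ^^ t) ((T ^^ (i * n)) x0)) ((T ^^ t) b) < e / 2"
    using odist_iter[OF orbit_in bX] by (simp add: odist_commute)
  obtain j where "j \<ge> i" and j: "odist ((T ^^ t) b) ((T ^^ (j * n)) x0) < e / 2"
    using return_set_approx_late[OF tb \<open>e / 2 > 0\<close>] by blast
  have "odist ((T ^^ t) ((T ^^ (i * n)) x0)) ((T ^^ (j * n)) x0) < e"
    using odist_triangle[of "(T ^^ t) ((T ^^ (i * n)) x0)" "(T ^^ t) b" "(T ^^ (j * n)) x0"]
      iter_in bX orbit_in i j by fastforce
  moreover have "(T ^^ t) ((T ^^ (i * n)) x0) = (T ^^ (i * n)) ((T ^^ t) x0)"
    by (simp add: funpow_add_apply[symmetric] add.commute)
  moreover have "(T ^^ (j * n)) x0 = (T ^^ (i * n)) ((T ^^ ((j - i) * n)) x0)"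
    using \<open>j \<ge> i\<close> by (simp add: funpow_add_apply[symmetric] diff_mult_distrib)
  ultimately have "odist ((T ^^ t) x0) ((T ^^ ((j - i) * n)) x0) < e"
    using odist_iter[OF orbit_in orbit_in] by simp
  then show "\<exists>i. odist ((T ^^ t) x0) ((T ^^ (i * n)) x0) < e" by blast
qed

context
  fixes n :: nat
  assumes n_pos: "n \<ge> 1"
begin

lemma period_pos: "0 < period n"
  and orbit_period_in_return_set: "(T ^^ period n) x0 \<in> return_set n"
proof -
  have "0 < n \<and> (T ^^ n) x0 \<in> return_set n"
    using n_pos orbit_in_return_set[of 1 n] by simp
  then have "0 < period n \<and> (T ^^ period n) x0 \<in> return_set n"
    unfolding period_def by (rule LeastI)
  then show "0 < period n" "(T ^^ period n) x0 \<in> return_set n" by blast+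
qed

lemma orbit_notin_return_set: "0 < q \<Longrightarrow> q < period n \<Longrightarrow> (T ^^ q) x0 \<notin> return_set n"
  unfolding period_def using not_less_Least by blast

lemma return_set_period_invariant: "(T ^^ (k * period n)) ` return_set n \<subseteq> return_set n"
proof (induction k)
  case (Suc k)
  have "T ^^ (Suc k * period n) = (T ^^ period n) \<circ> (T ^^ (k * period n))"
    by (simp add: funpow_add[symmetric])
  then show ?case
    using Suc return_set_invariant[OF orbit_period_in_return_set] by (simp add: image_comp[symmetric]) blast
qed simp

lemma piece_subset: "piece n r \<subseteq> X"
  unfolding piece_def using return_set_subset iter_in by blast

lemma compact_piece: "compact (piece n r)"
  unfolding piece_def
  by (rule compact_continuous_image[OF continuous_on_subset[OF continuous_on_iter return_set_subset]
        compact_return_set])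

lemma orbit_in_piece: "(T ^^ m) x0 \<in> piece n (m mod period n)"
proof -
  have "(T ^^ m) x0 = (T ^^ (m mod period n)) ((T ^^ (m div period n * period n)) x0)"
    by (simp add: funpow_add_apply[symmetric])
  moreover have "(T ^^ (m div period n * period n)) x0 \<in> return_set n"
    using return_set_period_invariant x0_in_return_set by blast
  ultimately show ?thesis unfolding piece_def by blast
qed

lemma pieces_cover: "x \<in> X \<Longrightarrow> \<exists>r<period n. x \<in> piece n r"
proof -
  assume x: "x \<in> X"
  let ?U = "\<Union>r<period n. piece n r"
  have "closed ?U"
    by (intro compact_imp_closed compact_UN) (auto intro: compact_piece)
  moreover have "range (\<lambda>m. (T ^^ m) x0) \<subseteq> ?U"
    using orbit_in_piece period_pos by (auto intro: mod_less_divisor)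
  ultimately have "closure (range (\<lambda>m. (T ^^ m) x0)) \<subseteq> ?U"
    by (rule closure_minimal[rotated])
  then show ?thesis using x dense_x0 unfolding dense_orbit_def by auto
qed

lemma pieces_disjoint:
  assumes "r < period n" "s < period n" "x \<in> piece n r" "x \<in> piece n s"
  shows "r = s"
proof -
  have False if rs: "r < s" "s < period n" "x \<in> piece n r" "x \<in> piece n s" for r s
  proof -
    obtain a b where ab: "a \<in> return_set n" "b \<in> return_set n" "x = (T ^^ r) a" "x = (T ^^ s) b"
      using rs unfolding piece_def by blast
    have "(T ^^ s) b = (T ^^ r) ((T ^^ (s - r)) b)"
      using rs(1) by (simp add: funpow_add_apply[symmetric])
    then have "a = (T ^^ (s - r)) b"
      using iter_inj[of a "(T ^^ (s - r)) b" r] ab return_set_subset iter_in by auto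
    then have "(T ^^ (s - r)) x0 \<in> return_set n"
      using orbit_in_return_set_if_return[OF ab(2)] ab(1) by simp
    then show False
      using orbit_notin_return_set[of "s - r"] rs by simp
  qed
  then show "r = s" using assms by (metis linorder_neqE_nat)
qed

lemma piece_index: "x \<in> X \<Longrightarrow> piece_index n x < period n \<and> x \<in> piece n (piece_index n x)"
  unfolding piece_index_def by (rule theI') (use pieces_cover pieces_disjoint in blast)

lemma piece_index_less: "x \<in> X \<Longrightarrow> piece_index n x < period n"
  using piece_index by blast

lemma piece_index_eqI: "r < period n \<Longrightarrow> x \<in> piece n r \<Longrightarrow> piece_index n x = r"
  using piece_index pieces_disjoint piece_subset by blast

lemma piece_index_orbit: "piece_index n ((T ^^ m) x0) = m mod period n"
  using piece_index_eqI orbit_in_piece period_pos by simp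

lemma piece_index_T: assumes "x \<in> X" shows "piece_index n (T x) = Suc (piece_index n x) mod period n"
proof -
  obtain a where a: "a \<in> return_set n" "x = (T ^^ piece_index n x) a"
    using piece_index[OF assms] unfolding piece_def by blast
  then have Tx: "T x = (T ^^ Suc (piece_index n x)) a" by simp
  show ?thesis
  proof (cases "Suc (piece_index n x) < period n")
    case True
    have "T x \<in> piece n (Suc (piece_index n x))"
      using Tx a(1) unfolding piece_def by blast
    then show ?thesis
      using True piece_index_eqI by simp
  next
    case False
    then have "Suc (piece_index n x) = period n"
      using piece_index_less[OF assms] by simp
    then have "T x \<in> return_set n"
      using Tx a(1) return_set_invariant[OF orbit_period_in_return_set] by auto
    then have "T x \<in> piece n 0"
      unfolding piece_def by simp
    then show ?thesis
      using piece_index_eqI[of 0] period_pos \<open>Suc (piece_index n x) = period n\<close> by simp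
  qed
qed

lemma odist_le_if_same_piece:
  assumes close: "\<forall>i. odist ((T ^^ (i * n)) x0) x0 < \<epsilon>" and "x \<in> X" "y \<in> X"
    and same: "piece_index n x = piece_index n y"
  shows "odist x y \<le> 2 * \<epsilon>"
proof -
  have near_x0: "odist a x0 \<le> \<epsilon>" if a: "a \<in> return_set n" for a
  proof (rule field_le_epsilon)
    fix e :: real assume "e > 0"
    have "a \<in> X" using a return_set_subset by blast
    then obtain i where "odist a ((T ^^ (i * n)) x0) < e"
      using in_return_set_iff a \<open>e > 0\<close> by blast
    then show "odist a x0 \<le> \<epsilon> + e"
      using odist_triangle[OF \<open>a \<in> X\<close> orbit_in x0_in, of "i * n"] close[rule_format, of i]
      by linarith
  qed
  let ?c = "(T ^^ piece_index n x) x0"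
  have near_c: "odist z ?c \<le> \<epsilon>" if z: "z \<in> piece n (piece_index n x)" for z
  proof -
    obtain a where a: "a \<in> return_set n" "z = (T ^^ piece_index n x) a"
      using z unfolding piece_def by blast
    then have "odist z ?c = odist a x0"
      using odist_iter[OF _ x0_in, of a] return_set_subset by blast
    then show ?thesis
      using near_x0[OF a(1)] by simp
  qed
  have "odist x ?c \<le> \<epsilon>" "odist y ?c \<le> \<epsilon>"
    using near_c piece_index \<open>x \<in> X\<close> \<open>y \<in> X\<close> same by metis+
  moreover have "odist x y \<le> odist x ?c + odist ?c y"
    using odist_triangle \<open>x \<in> X\<close> orbit_in \<open>y \<in> X\<close> by blast
  ultimately show ?thesis
    using odist_commute[of ?c y] by linarith
qed

lemma piece_index_locally_constant:
  assumes "x \<in> X"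
  shows "\<exists>\<delta>>0. \<forall>y\<in>X. dist y x < \<delta> \<longrightarrow> piece_index n y = piece_index n x"
proof -
  let ?C = "\<Union>s\<in>{s. s < period n \<and> s \<noteq> piece_index n x}. piece n s"
  have "closed ?C"
    by (intro compact_imp_closed compact_UN) (auto intro: compact_piece)
  moreover have "x \<notin> ?C"
    using pieces_disjoint piece_index[OF assms] by blast
  ultimately obtain \<delta> where "\<delta> > 0" and \<delta>: "ball x \<delta> \<subseteq> - ?C"
    using open_contains_ball[of "- ?C"] by blast
  have "piece_index n y = piece_index n x" if y: "y \<in> X" "dist y x < \<delta>" for y
  proof (rule ccontr)
    assume "piece_index n y \<noteq> piece_index n x"
    then have "y \<in> ?C" using piece_index[OF y(1)] by blast
    moreover have "y \<in> ball x \<delta>" using y(2) by (simp add: dist_commute)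
    ultimately show False using \<delta> by blast
  qed
  then show ?thesis using \<open>\<delta> > 0\<close> by blast
qed

end

lemma return_set_antimono: "n dvd n' \<Longrightarrow> return_set n' \<subseteq> return_set n"
  unfolding return_set_def
proof (intro closure_mono subsetI)
  fix z assume "n dvd n'" "z \<in> range (\<lambda>i. (T ^^ (i * n')) x0)"
  then obtain i k where "z = (T ^^ (i * n')) x0" "n' = n * k" by blast
  then have "z = (T ^^ ((i * k) * n)) x0" by (simp add: algebra_simps)
  then show "z \<in> range (\<lambda>i. (T ^^ (i * n)) x0)" by blast
qed

lemma period_dvd:
  assumes "n \<ge> 1" "n' \<ge> 1" "n dvd n'"
  shows "period n dvd period n'"
proof -
  have "(T ^^ period n') x0 \<in> piece n 0"
    using orbit_period_in_return_set[OF assms(2)] return_set_antimono[OF assms(3)]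
    unfolding piece_def by auto
  then have "piece_index n ((T ^^ period n') x0) = 0"
    using piece_index_eqI[OF assms(1) period_pos[OF assms(1)]] by blast
  then show ?thesis
    using piece_index_orbit[OF assms(1)] by (simp add: dvd_eq_mod_eq_0)
qed

lemma piece_index_mod:
  assumes "n \<ge> 1" "n' \<ge> 1" "n dvd n'" "x \<in> X"
  shows "piece_index n x = piece_index n' x mod period n"
proof -
  let ?r = "piece_index n' x"
  obtain a where a: "a \<in> return_set n'" "x = (T ^^ ?r) a"
    using piece_index[OF assms(2,4)] unfolding piece_def by blast
  have "x = (T ^^ (?r mod period n)) ((T ^^ (?r div period n * period n)) a)"
    using a(2) by (simp add: funpow_add_apply[symmetric])
  moreover have "(T ^^ (?r div period n * period n)) a \<in> return_set n"
    using return_set_period_invariant[OF assms(1)] a(1) return_set_antimono[OF assms(3)] by blast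
  ultimately have "x \<in> piece n (?r mod period n)"
    unfolding piece_def by blast
  then show ?thesis
    using piece_index_eqI[OF assms(1)] period_pos[OF assms(1)] by simp
qed

lemma period_one: "period 1 = 1"
proof (rule ccontr)
  assume "period 1 \<noteq> 1"
  then have "(T ^^ 1) x0 \<notin> return_set 1"
    using period_pos[of 1] orbit_notin_return_set[of 1 1] by simp
  moreover have "(T ^^ 1) x0 \<in> return_set 1"
    using orbit_in_return_set[of 1 1] by simp
  ultimately show False by contradiction
qed

text \<open>On an infinite \<open>X\<close> a pigeonhole argument finds two distinct points with the same
  index, so a partition fine enough to separate them has a strictly longer cycle.\<close>

lemma finer_partition_exists:
  assumes "infinite X" "n \<ge> 1" "e > 0"
  shows "\<exists>n'. n' \<ge> 1 \<and> n dvd n' \<and> period n < period n' \<and>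
           (\<forall>x\<in>X. \<forall>y\<in>X. piece_index n' x = piece_index n' y \<longrightarrow> odist x y \<le> e)"
proof -
  have "\<not> inj_on (piece_index n) X"
  proof
    assume "inj_on (piece_index n) X"
    moreover have "piece_index n ` X \<subseteq> {..<period n}"
      using piece_index_less[OF assms(2)] by blast
    ultimately show False
      using assms(1) inj_on_finite by blast
  qed
  then obtain a b where ab: "a \<in> X" "b \<in> X" "a \<noteq> b" "piece_index n a = piece_index n b"
    unfolding inj_on_def by blast
  define \<epsilon> where "\<epsilon> = min e (odist a b) / 3"
  have "\<epsilon> > 0" and \<epsilon>: "2 * \<epsilon> \<le> e" "2 * \<epsilon> < odist a b"
    using assms(3) odist_pos[OF ab(1-3)] unfolding \<epsilon>_def by auto
  then obtain m where "m \<ge> 1" and m: "\<forall>i. odist ((T ^^ (i * m)) x0) x0 < \<epsilon>"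
    using recurrence by blast
  define n' where "n' = m * n"
  have n': "n' \<ge> 1" "n dvd n'"
    using \<open>m \<ge> 1\<close> assms(2) unfolding n'_def by simp_all
  have "odist ((T ^^ (i * n')) x0) x0 < \<epsilon>" for i
    using m[rule_format, of "i * n"] unfolding n'_def by (simp add: ac_simps)
  then have fine: "odist x y \<le> 2 * \<epsilon>"
    if "x \<in> X" "y \<in> X" "piece_index n' x = piece_index n' y" for x y
    using odist_le_if_same_piece[OF n'(1)] that by blast
  have "period n' \<noteq> period n"
  proof
    assume eq: "period n' = period n"
    then have "piece_index n' z = piece_index n z" if "z \<in> X" for z
      using piece_index_mod[OF assms(2) n' that] piece_index_less[OF n'(1) that] by simp
    then have "odist a b \<le> 2 * \<epsilon>"
      using fine[OF ab(1,2)] ab by simp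
    then show False using \<epsilon> by linarith
  qed
  moreover have "period n \<le> period n'"
    using period_dvd[OF assms(2) n'] period_pos[OF n'(1)] by (simp add: dvd_imp_le)
  ultimately have "period n < period n'"
    by linarith
  then show ?thesis
    using n' fine \<epsilon>(1) by force
qed

end
subsection \<open>An ultrametric contracted by \<open>T\<close>\<close>

locale infinite_pointed_odometer = pointed_odometer +
  assumes infinite_X: "infinite X"
begin

definition refine :: "nat \<Rightarrow> nat \<Rightarrow> nat" where
  "refine n k = (SOME n'. n' \<ge> 1 \<and> n dvd n' \<and> period n < period n' \<and>
     (\<forall>x\<in>X. \<forall>y\<in>X. piece_index n' x = piece_index n' y \<longrightarrow> odist x y \<le> (1 / 2) ^ Suc k))"

primrec level :: "nat \<Rightarrow> nat" where
  "level 0 = 1"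
| "level (Suc k) = refine (level k) k"

definition cycle_len :: "nat \<Rightarrow> nat" where
  "cycle_len k = period (level k)"

definition coord :: "nat \<Rightarrow> 'a \<Rightarrow> nat" where
  "coord k x = piece_index (level k) x"

lemma refine_spec:
  "n \<ge> 1 \<Longrightarrow> refine n k \<ge> 1 \<and> n dvd refine n k \<and> period n < period (refine n k) \<and>
     (\<forall>x\<in>X. \<forall>y\<in>X. piece_index (refine n k) x = piece_index (refine n k) y \<longrightarrow> odist x y \<le> (1 / 2) ^ Suc k)"
  unfolding refine_def by (rule someI_ex) (rule finer_partition_exists[OF infinite_X], auto)

lemma level_pos: "level k \<ge> 1"
proof (induction k)
  case (Suc k)
  then show ?case using refine_spec[of "level k" k] by simp
qed simp

lemma level_Suc:
  "level k dvd level (Suc k) \<and> cycle_len k < cycle_len (Suc k) \<and>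
     (\<forall>x\<in>X. \<forall>y\<in>X. coord (Suc k) x = coord (Suc k) y \<longrightarrow> odist x y \<le> (1 / 2) ^ Suc k)"
  using refine_spec[OF level_pos[of k], of k] unfolding cycle_len_def coord_def by simp

lemma level_dvd: "k \<le> k' \<Longrightarrow> level k dvd level k'"
proof (induction k' rule: dec_induct)
  case (step k')
  then show ?case using level_Suc[of k'] dvd_trans by blast
qed simp

lemma cycle_len_pos: "0 < cycle_len k"
  unfolding cycle_len_def using period_pos[OF level_pos] .

lemma cycle_len_0: "cycle_len 0 = 1"
  unfolding cycle_len_def using period_one by simp

lemma cycle_len_dvd: "k \<le> k' \<Longrightarrow> cycle_len k dvd cycle_len k'"
  unfolding cycle_len_def using period_dvd[OF level_pos level_pos level_dvd] .

lemma coord_less: "x \<in> X \<Longrightarrow> coord k x < cycle_len k"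
  unfolding coord_def cycle_len_def using piece_index_less[OF level_pos] .

lemma coord_0: "x \<in> X \<Longrightarrow> coord 0 x = 0"
  using coord_less[of x 0] cycle_len_0 by simp

lemma coord_mod: "x \<in> X \<Longrightarrow> k \<le> k' \<Longrightarrow> coord k x = coord k' x mod cycle_len k"
  unfolding coord_def cycle_len_def using piece_index_mod[OF level_pos level_pos level_dvd] by blast

lemma coord_T: "x \<in> X \<Longrightarrow> coord k (T x) = Suc (coord k x) mod cycle_len k"
  unfolding coord_def cycle_len_def using piece_index_T[OF level_pos] .

lemma coord_T_eq_iff: "x \<in> X \<Longrightarrow> y \<in> X \<Longrightarrow> coord k (T x) = coord k (T y) \<longleftrightarrow> coord k x = coord k y"
  using coord_T Suc_mod_eq_Suc_mod_iff coord_less by simp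

lemma coord_locally_constant: "x \<in> X \<Longrightarrow> \<exists>\<delta>>0. \<forall>y\<in>X. dist y x < \<delta> \<longrightarrow> coord k y = coord k x"
  unfolding coord_def using piece_index_locally_constant[OF level_pos] .

lemma odist_le_if_coord_eq:
  "x \<in> X \<Longrightarrow> y \<in> X \<Longrightarrow> coord (Suc k) x = coord (Suc k) y \<Longrightarrow> odist x y \<le> (1 / 2) ^ Suc k"
  using level_Suc by blast

lemma coord_eq_mono: "x \<in> X \<Longrightarrow> y \<in> X \<Longrightarrow> coord k x = coord k y \<Longrightarrow> l \<le> k \<Longrightarrow> coord l x = coord l y"
  using coord_mod[of x l k] coord_mod[of y l k] by simp

lemma coord_separates:
  assumes "x \<in> X" "y \<in> X" "x \<noteq> y"
  shows "\<exists>k. coord k x \<noteq> coord k y"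
proof -
  obtain k where k: "(1 / 2 :: real) ^ k < odist x y"
    using real_arch_pow_inv[OF odist_pos[OF assms], of "1 / 2"] by auto
  have "(1 / 2 :: real) ^ Suc k \<le> (1 / 2) ^ k"
    by (rule power_decreasing) auto
  then have "\<not> odist x y \<le> (1 / 2) ^ Suc k"
    using k by linarith
  then show ?thesis
    using odist_le_if_coord_eq[OF assms(1,2)] by blast
qed

definition split_level :: "'a \<Rightarrow> 'a \<Rightarrow> nat" where
  "split_level x y = (LEAST k. coord k x \<noteq> coord k y)"

lemma split_level_commute: "split_level x y = split_level y x"
  unfolding split_level_def by (metis (full_types))

lemma coord_split_level:
  assumes "x \<in> X" "y \<in> X" "x \<noteq> y"
  shows "coord (split_level x y) x \<noteq> coord (split_level x y) y"
  unfolding split_level_def using coord_separates[OF assms] by (rule LeastI_ex)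

lemma coord_eq_iff_less_split_level:
  assumes "x \<in> X" "y \<in> X" "x \<noteq> y"
  shows "coord k x = coord k y \<longleftrightarrow> k < split_level x y"
proof
  assume "coord k x = coord k y"
  show "k < split_level x y"
  proof (rule ccontr)
    assume "\<not> k < split_level x y"
    then have "coord (split_level x y) x = coord (split_level x y) y"
      using coord_eq_mono[OF assms(1,2) \<open>coord k x = coord k y\<close>] by simp
    then show False
      using coord_split_level[OF assms] by contradiction
  qed
next
  assume "k < split_level x y"
  then show "coord k x = coord k y"
    unfolding split_level_def by (rule not_less_Least[THEN notnotD])
qed

lemma split_level_pos:
  assumes "x \<in> X" "y \<in> X" "x \<noteq> y"
  shows "1 \<le> split_level x y"
proof -
  have "coord 0 x = coord 0 y"
    using coord_0 assms by simp
  then show ?thesis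
    using coord_eq_iff_less_split_level[OF assms] by fastforce
qed

lemma split_level_min:
  assumes "x \<in> X" "y \<in> X" "z \<in> X" "x \<noteq> y" "y \<noteq> z" "x \<noteq> z"
  shows "min (split_level x y) (split_level y z) \<le> split_level x z"
proof (rule ccontr)
  assume "\<not> ?thesis"
  then have "split_level x z < split_level x y" "split_level x z < split_level y z"
    by simp_all
  then have "coord (split_level x z) x = coord (split_level x z) y"
    "coord (split_level x z) y = coord (split_level x z) z"
    using coord_eq_iff_less_split_level assms by blast+
  then show False
    using coord_split_level[of x z] assms by simp
qed

lemma split_level_T:
  assumes "x \<in> X" "y \<in> X"
  shows "split_level (T x) (T y) = split_level x y"
  unfolding split_level_def using coord_T_eq_iff[OF assms] by simp

text \<open>At level \<open>m\<close> the weight drops by \<open>1 / cycle_len m\<close> each time \<open>T\<close> advances the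
  coordinate, except when the coordinate leaves \<open>jump m\<close>. The jump positions \<open>jump (Suc l) = cycle_len l\<close>
  are chosen so that every point sits on a jump at no more than one positive level, since
  \<open>cycle_len m\<close> divides \<open>cycle_len l\<close> for \<open>m \<le> l\<close>.\<close>

definition jump :: "nat \<Rightarrow> nat" where
  "jump m = (case m of 0 \<Rightarrow> 0 | Suc l \<Rightarrow> cycle_len l)"

definition weight :: "nat \<Rightarrow> nat \<Rightarrow> real" where
  "weight m r = 1 + real_of_int ((int (jump m) - int r) mod int (cycle_len m)) / real (cycle_len m)"

lemma jump_less: "jump m < cycle_len m"
proof (cases m)
  case (Suc l)
  then show ?thesis using level_Suc[of l] by (simp add: jump_def)
qed (simp add: jump_def cycle_len_pos)

lemma weight_bounds: "1 \<le> weight m r" "weight m r < 2"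
proof -
  let ?s = "(int (jump m) - int r) mod int (cycle_len m)"
  have "0 \<le> ?s" "?s < int (cycle_len m)"
    using cycle_len_pos[of m] by simp_all
  then have "0 \<le> real_of_int ?s" "real_of_int ?s < real_of_int (int (cycle_len m))"
    by (simp_all only: of_int_0_le_iff of_int_less_iff)
  then have "0 \<le> real_of_int ?s / real (cycle_len m)" "real_of_int ?s / real (cycle_len m) < 1"
    using cycle_len_pos[of m] by (simp_all add: divide_less_eq)
  then show "1 \<le> weight m r" "weight m r < 2"
    unfolding weight_def by linarith+
qed

lemma weight_Suc_mod_less:
  assumes "r < cycle_len m" "r \<noteq> jump m"
  shows "weight m (Suc r mod cycle_len m) < weight m r"
proof -
  let ?s = "(int (jump m) - int r) mod int (cycle_len m)"
  have "real_of_int (?s - 1) / real (cycle_len m) < real_of_int ?s / real (cycle_len m)"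
    using cycle_len_pos[of m] by (intro divide_strict_right_mono) auto
  then show ?thesis
    unfolding weight_def int_mod_diff_Suc_mod[OF jump_less assms] by simp
qed

lemma eventually_coord_ne_jump:
  assumes "x \<in> X"
  shows "\<exists>M. \<forall>m\<ge>M. coord m x \<noteq> jump m"
proof (rule ccontr)
  assume "\<nexists>M. \<forall>m\<ge>M. coord m x \<noteq> jump m"
  then have often: "\<exists>m\<ge>M. coord m x = jump m" for M
    by (simp add: not_less)
  obtain m1 where "m1 \<ge> 1" and jump1: "coord m1 x = jump m1"
    using often by blast
  then obtain l1 where l1: "m1 = Suc l1"
    by (cases m1) auto
  obtain m2 where "m2 \<ge> Suc m1" and jump2: "coord m2 x = jump m2"
    using often by blast
  then obtain l2 where l2: "m2 = Suc l2" "m1 \<le> l2"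
    by (cases m2) auto
  have jumps: "coord m1 x = cycle_len l1" "coord m2 x = cycle_len l2"
    using jump1 jump2 l1 l2(1) by (simp_all add: jump_def)
  have "cycle_len l1 = cycle_len l2 mod cycle_len m1"
    using coord_mod[OF assms, of m1 m2] \<open>m2 \<ge> Suc m1\<close> jumps by simp
  also have "\<dots> = 0"
    using cycle_len_dvd[OF l2(2)] by simp
  finally show False
    using cycle_len_pos[of l1] by simp
qed

definition rho :: "'a \<Rightarrow> 'a \<Rightarrow> real" where
  "rho x y = (if x \<in> X \<and> y \<in> X \<and> x \<noteq> y
     then (1 / 2) ^ split_level x y * weight (split_level x y - 1) (coord (split_level x y - 1) x)
     else 0)"

lemma rho_eq:
  "x \<in> X \<Longrightarrow> y \<in> X \<Longrightarrow> x \<noteq> y \<Longrightarrow>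
    rho x y = (1 / 2) ^ split_level x y * weight (split_level x y - 1) (coord (split_level x y - 1) x)"
  unfolding rho_def by simp

lemma rho_bounds:
  assumes "x \<in> X" "y \<in> X" "x \<noteq> y"
  shows "(1 / 2) ^ split_level x y \<le> rho x y" "rho x y < 2 * (1 / 2) ^ split_level x y"
  unfolding rho_eq[OF assms] using weight_bounds by simp_all

lemma rho_nonneg: "0 \<le> rho x y"
  unfolding rho_def using weight_bounds(1) by (simp add: order.trans[OF zero_le_one])

lemma rho_commute: "rho x y = rho y x"
proof (cases "x \<in> X \<and> y \<in> X \<and> x \<noteq> y")
  case True
  then have xy: "x \<in> X" "y \<in> X" "x \<noteq> y" by auto
  then have "split_level x y - 1 < split_level x y"
    using split_level_pos[OF xy] by simp
  then have "coord (split_level x y - 1) x = coord (split_level x y - 1) y"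
    using coord_eq_iff_less_split_level[OF xy] by blast
  then show ?thesis
    using rho_eq[OF xy] rho_eq[OF xy(2,1) xy(3)[symmetric]] split_level_commute[of x y] by simp
qed (auto simp: rho_def)

lemma rho_eq_0_iff: "x \<in> X \<Longrightarrow> y \<in> X \<Longrightarrow> rho x y = 0 \<longleftrightarrow> x = y"
  using rho_bounds(1)[of x y] by (auto simp: rho_def)

lemma rho_less_iff:
  assumes "x \<in> X" "y \<in> X"
  shows "rho x y < (1 / 2) ^ k \<longleftrightarrow> coord k x = coord k y"
proof (cases "x = y")
  case False
  note bounds = rho_bounds[OF assms False]
  have "rho x y < (1 / 2) ^ k \<longleftrightarrow> k < split_level x y"
  proof
    assume "rho x y < (1 / 2) ^ k"
    then have "(1 / 2 :: real) ^ split_level x y < (1 / 2) ^ k"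
      using bounds by linarith
    show "k < split_level x y"
    proof (rule ccontr)
      assume "\<not> k < split_level x y"
      then have "(1 / 2 :: real) ^ k \<le> (1 / 2) ^ split_level x y"
        by (intro power_decreasing) auto
      then show False
        using \<open>(1 / 2 :: real) ^ split_level x y < (1 / 2) ^ k\<close> by linarith
    qed
  next
    assume "k < split_level x y"
    then have "(1 / 2 :: real) ^ split_level x y \<le> (1 / 2) ^ Suc k"
      by (intro power_decreasing) auto
    then show "rho x y < (1 / 2) ^ k"
      using bounds by simp
  qed
  then show ?thesis
    using coord_eq_iff_less_split_level[OF assms False] by simp
qed (simp add: rho_def)

lemma rho_le_if_split_level_le:
  assumes "x \<in> X" "y \<in> X" "z \<in> X" "x \<noteq> y" "x \<noteq> z"
    and le: "split_level x y \<le> split_level x z"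
  shows "rho x z \<le> rho x y"
proof (cases "split_level x y = split_level x z")
  case True
  then show ?thesis
    using rho_eq[of x y] rho_eq[of x z] assms by simp
next
  case False
  then have "(1 / 2 :: real) ^ split_level x z \<le> (1 / 2) ^ Suc (split_level x y)"
    using le by (intro power_decreasing) auto
  then show ?thesis
    using rho_bounds[of x z] rho_bounds[of x y] assms by simp
qed

lemma rho_ultrametric:
  assumes "x \<in> X" "y \<in> X" "z \<in> X"
  shows "rho x z \<le> max (rho x y) (rho y z)"
proof (cases "x = y \<or> y = z \<or> x = z")
  case True
  then show ?thesis
    using rho_nonneg[of x y] by (auto simp: rho_def)
next
  case False
  then have distinct: "x \<noteq> y" "y \<noteq> z" "x \<noteq> z" by auto
  show ?thesis
  proof (cases "split_level x y \<le> split_level y z")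
    case True
    then have "split_level x y \<le> split_level x z"
      using split_level_min[OF assms distinct] by simp
    then show ?thesis
      using rho_le_if_split_level_le[of x y z] assms distinct by simp
  next
    case False
    then have "split_level z y \<le> split_level z x"
      using split_level_min[OF assms distinct] split_level_commute by simp
    then have "rho z x \<le> rho z y"
      using rho_le_if_split_level_le[of z y x] assms distinct by simp
    then show ?thesis
      using rho_commute[of x z] rho_commute[of y z] by simp
  qed
qed

lemma Metric_space_rho: "Metric_space X rho"
proof
  fix x y z assume "x \<in> X" "y \<in> X" "z \<in> X"
  then show "rho x z \<le> rho x y + rho y z"
    using rho_ultrametric rho_nonneg[of x y] rho_nonneg[of y z] by (smt (verit))
qed (simp_all add: rho_nonneg rho_commute rho_eq_0_iff)

lemma mtopology_rho: "Metric_space.mtopology X rho = top_of_set X"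
proof (rule mtopology_eq_top_of_set[OF Metric_space_rho])
  fix x and e :: real assume "x \<in> X" "e > 0"
  obtain k where k: "(1 / 2 :: real) ^ k < e"
    using real_arch_pow_inv[OF \<open>e > 0\<close>, of "1 / 2"] by auto
  obtain \<delta> where "\<delta> > 0" and \<delta>: "\<forall>y\<in>X. dist y x < \<delta> \<longrightarrow> coord k y = coord k x"
    using coord_locally_constant[OF \<open>x \<in> X\<close>] by blast
  have "rho x y < e" if "y \<in> X" "dist x y < \<delta>" for y
    using \<delta> that rho_less_iff[OF \<open>x \<in> X\<close> \<open>y \<in> X\<close>, of k] k by (simp add: dist_commute)
  then show "\<exists>\<delta>>0. \<forall>y\<in>X. dist x y < \<delta> \<longrightarrow> rho x y < e"
    using \<open>\<delta> > 0\<close> by blast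
next
  fix x and e :: real assume "x \<in> X" "e > 0"
  obtain k where k: "(1 / 2 :: real) ^ k < e"
    using real_arch_pow_inv[OF \<open>e > 0\<close>, of "1 / 2"] by auto
  have "(1 / 2 :: real) ^ Suc k \<le> (1 / 2) ^ k"
    by (rule power_decreasing) auto
  then have "dist x y < e" if "y \<in> X" "rho x y < (1 / 2) ^ Suc k" for y
    using rho_less_iff[OF \<open>x \<in> X\<close> that(1), of "Suc k"] that
      odist_le_if_coord_eq[OF \<open>x \<in> X\<close> that(1), of k] dist_le_odist[OF \<open>x \<in> X\<close> that(1)] k
    by linarith
  then show "\<exists>\<delta>>0. \<forall>y\<in>X. rho x y < \<delta> \<longrightarrow> dist x y < e"
    by (metis zero_less_divide_1_iff zero_less_numeral zero_less_power)
qed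

lemma LRS_rho: "LRS X T rho"
  unfolding LRS_def
proof
  fix x assume "x \<in> X"
  obtain M where M: "\<forall>m\<ge>M. coord m x \<noteq> jump m"
    using eventually_coord_ne_jump[OF \<open>x \<in> X\<close>] by blast
  have "rho (T x) (T y) < rho x y" if "y \<in> X" "0 < rho x y" "rho x y < (1 / 2) ^ Suc M" for y
  proof -
    define K where "K = split_level x y"
    have "x \<noteq> y" using that(2) by (auto simp: rho_def)
    have Txy: "T x \<in> X" "T y \<in> X" "T x \<noteq> T y"
      using T_into \<open>x \<in> X\<close> that(1) iter_inj[of x y 1] \<open>x \<noteq> y\<close> by auto
    have "Suc M < K"
      using rho_less_iff[OF \<open>x \<in> X\<close> that(1)] coord_eq_iff_less_split_level[OF \<open>x \<in> X\<close> that(1) \<open>x \<noteq> y\<close>]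
        that(3) unfolding K_def by blast
    then have "coord (K - 1) x \<noteq> jump (K - 1)"
      using M by simp
    then have "weight (K - 1) (coord (K - 1) (T x)) < weight (K - 1) (coord (K - 1) x)"
      using weight_Suc_mod_less coord_less[OF \<open>x \<in> X\<close>] coord_T[OF \<open>x \<in> X\<close>] by simp
    moreover have "split_level (T x) (T y) = K"
      using split_level_T[OF \<open>x \<in> X\<close> that(1)] unfolding K_def .
    ultimately show ?thesis
      using rho_eq[OF Txy] rho_eq[OF \<open>x \<in> X\<close> that(1) \<open>x \<noteq> y\<close>] unfolding K_def by simp
  qed
  then show "\<exists>\<epsilon>>0. \<forall>y\<in>X. 0 < rho x y \<and> rho x y < \<epsilon> \<longrightarrow> rho (T x) (T y) < rho x y"
    by (metis zero_less_divide_1_iff zero_less_numeral zero_less_power)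
qed

end

theorem corollary3p3:
  fixes X :: "'a::metric_space set" and T :: "'a \<Rightarrow> 'a"
  assumes "odometer X T"
  shows "\<exists>\<rho>. Metric_space X \<rho> \<and> Metric_space.mtopology X \<rho> = top_of_set X \<and> LRS X T \<rho>"
proof (cases "finite X")
  case True
  then show ?thesis
    using Met_TC.subspace mtopology_dist_eq_top_of_set LRS_dist_finite by blast
next
  case False
  from assms obtain x0 where "pointed_odometer X T x0"
    unfolding odometer_def dyn_system_def pointed_odometer_def by blast
  then interpret infinite_pointed_odometer X T x0
    using False by (simp add: infinite_pointed_odometer_def infinite_pointed_odometer_axioms_def)
  show ?thesis
    using Metric_space_rho mtopology_rho LRS_rho by blast
qed

end
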